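(* Let $(G,S,C,\phi_0)$ be a minimal counterexample with outer face $D$ (so $S=V(D)$). If $e=uv$ is an edge of $G$ not in $E(D)$, then $|E(C_{uv})|\ge 2$. Moreover, if $e$ is not contained in a triangle, then $|E(C_{uv})|=3$.
   Context: All graphs are finite and simple. Two cycles are adjacent if they share at least one common edge. A $3$-correspondence assignment for $G$ consists of the list $L(u)=\{1,2,3\}$ for each vertex together with, for each edge $e=uv$, a matching $C_e$ (not necessarily perfect) between $\{u\}\times\{1,2,3\}$ and $\{v\}\times\{1,2,3\}$. A $C$-coloring is a map $\phi$ to $\{1,2,3\}$ with $(u,\phi(u))(v,\phi(v))\notin E(C_{uv})$ for every edge $uv$. For a closed walk $v_1\dots v_m$ ($v_m=v_1$), $C$ is inconsistent on it if there are colors $c_i$ with $(v_i,c_i)(v_{i+1},c_{i+1})\in E(C_{v_iv_{i+1}})$ for all $i\in[m-1]$ and $c_1\ne c_m$. A counterexample is a quadruple $(G,S,C,\phi_0)$ where $G$ is a plane graph with no two adjacent cycles of length at most $8$, $S\subseteq V(G)$ with $|S|\le 12$ is either a single vertex or the vertex set of the boundary of a face, $C$ is a $3$-correspondence assignment consistent on every closed walk of length $3$, and $\phi_0$ is a $C$-coloring of $G[S]$ that does not extend to a $C$-coloring of $G$. A minimal counterexample is a counterexample minimizing $|V(G)|$, subject to that minimizing $|E(G)|-|E(G[S])|$, and subject to both maximizing $\sum_{uv\in E(G)}|E(C_{uv})|$. In a minimal counterexample $S$ is the vertex set of a face, and the embedding is chosen so that this face is the outer face $D$. *)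

theory Defs
  imports "HOL-Analysis.Analysis"
begin

definition simple_graph :: "'a set \<Rightarrow> 'a set set \<Rightarrow> bool" where
  "simple_graph V E \<longleftrightarrow> finite V \<and> (\<forall>e\<in>E. e \<subseteq> V \<and> card e = 2)"

definition plane_graph ::
  "'a set \<Rightarrow> 'a set set \<Rightarrow> ('a \<Rightarrow> complex) \<Rightarrow> ('a set \<Rightarrow> real \<Rightarrow> complex) \<Rightarrow> bool" where
  "plane_graph V E pos \<gamma> \<longleftrightarrow>
     simple_graph V E \<and> inj_on pos V \<and>
     (\<forall>e\<in>E. arc (\<gamma> e) \<and> {pathstart (\<gamma> e), pathfinish (\<gamma> e)} = pos ` e) \<and>
     (\<forall>e\<in>E. \<forall>w\<in>V. pos w \<in> path_image (\<gamma> e) \<longrightarrow> w \<in> e) \<and>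
     (\<forall>e\<in>E. \<forall>e'\<in>E. e \<noteq> e' \<longrightarrow>
        path_image (\<gamma> e) \<inter> path_image (\<gamma> e') \<subseteq> pos ` (e \<inter> e'))"

definition drawing ::
  "'a set \<Rightarrow> 'a set set \<Rightarrow> ('a \<Rightarrow> complex) \<Rightarrow> ('a set \<Rightarrow> real \<Rightarrow> complex) \<Rightarrow> complex set" where
  "drawing V E pos \<gamma> = pos ` V \<union> (\<Union>e\<in>E. path_image (\<gamma> e))"

definition faces ::
  "'a set \<Rightarrow> 'a set set \<Rightarrow> ('a \<Rightarrow> complex) \<Rightarrow> ('a set \<Rightarrow> real \<Rightarrow> complex) \<Rightarrow> complex set set" where
  "faces V E pos \<gamma> = components (- drawing V E pos \<gamma>)"

definition face_vertices :: "'a set \<Rightarrow> ('a \<Rightarrow> complex) \<Rightarrow> complex set \<Rightarrow> 'a set" where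
  "face_vertices V pos F = {v\<in>V. pos v \<in> frontier F}"

definition face_edges ::
  "'a set set \<Rightarrow> ('a set \<Rightarrow> real \<Rightarrow> complex) \<Rightarrow> complex set \<Rightarrow> 'a set set" where
  "face_edges E \<gamma> F = {e\<in>E. path_image (\<gamma> e) \<subseteq> frontier F}"

text \<open>A cycle of length k is given by a list of k \<ge> 3 distinct vertices, consecutive ones
  (cyclically) adjacent; as a subgraph it is determined by its edge set.\<close>
definition is_cycle :: "'a set set \<Rightarrow> 'a list \<Rightarrow> bool" where
  "is_cycle E vs \<longleftrightarrow> length vs \<ge> 3 \<and> distinct vs \<and>
     (\<forall>i<length vs. {vs ! i, vs ! ((i + 1) mod length vs)} \<in> E)"

definition cycle_edges :: "'a list \<Rightarrow> 'a set set" where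
  "cycle_edges vs = {{vs ! i, vs ! ((i + 1) mod length vs)} | i. i < length vs}"

definition no_adjacent_short_cycles :: "'a set set \<Rightarrow> bool" where
  "no_adjacent_short_cycles E \<longleftrightarrow>
     (\<forall>vs ws. is_cycle E vs \<and> is_cycle E ws \<and> length vs \<le> 8 \<and> length ws \<le> 8 \<and>
        cycle_edges vs \<noteq> cycle_edges ws \<longrightarrow> cycle_edges vs \<inter> cycle_edges ws = {})"

text \<open>M u v is the set of colour pairs (c,d) such that (u,c)(v,d) is an edge of the matching
  C_uv.  We normalise M u v = {} for non-adjacent u, v and require M v u to be the converse.\<close>
definition corr3 :: "'a set set \<Rightarrow> ('a \<Rightarrow> 'a \<Rightarrow> (nat \<times> nat) set) \<Rightarrow> bool" where
  "corr3 E M \<longleftrightarrow>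
     (\<forall>u v. M u v \<subseteq> {1,2,3} \<times> {1,2,3}) \<and>
     (\<forall>u v. M v u = converse (M u v)) \<and>
     (\<forall>u v. {u, v} \<notin> E \<longrightarrow> M u v = {}) \<and>
     (\<forall>u v c d d'. (c, d) \<in> M u v \<longrightarrow> (c, d') \<in> M u v \<longrightarrow> d = d') \<and>
     (\<forall>u v c c' d. (c, d) \<in> M u v \<longrightarrow> (c', d) \<in> M u v \<longrightarrow> c = c')"

definition C_edges :: "('a \<Rightarrow> 'a \<Rightarrow> (nat \<times> nat) set) \<Rightarrow> 'a set \<Rightarrow> ('a \<times> nat) set set" where
  "C_edges M e = {{(u, c), (v, d)} | u v c d. e = {u, v} \<and> (c, d) \<in> M u v}"

definition closed_walk :: "'a set set \<Rightarrow> 'a list \<Rightarrow> bool" where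
  "closed_walk E ws \<longleftrightarrow> ws \<noteq> [] \<and> hd ws = last ws \<and>
     (\<forall>i. Suc i < length ws \<longrightarrow> {ws ! i, ws ! Suc i} \<in> E)"

definition inconsistent_on :: "('a \<Rightarrow> 'a \<Rightarrow> (nat \<times> nat) set) \<Rightarrow> 'a list \<Rightarrow> bool" where
  "inconsistent_on M ws \<longleftrightarrow>
     (\<exists>cs. length cs = length ws \<and> cs \<noteq> [] \<and>
        (\<forall>i. Suc i < length ws \<longrightarrow> (cs ! i, cs ! Suc i) \<in> M (ws ! i) (ws ! Suc i)) \<and>
        hd cs \<noteq> last cs)"

text \<open>Consistent on every closed walk of length 3 (i.e. with 3 edges, 4 listed vertices).\<close>
definition consistent_on_triangles :: "'a set set \<Rightarrow> ('a \<Rightarrow> 'a \<Rightarrow> (nat \<times> nat) set) \<Rightarrow> bool" where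
  "consistent_on_triangles E M \<longleftrightarrow>
     (\<forall>ws. closed_walk E ws \<and> length ws = 4 \<longrightarrow> \<not> inconsistent_on M ws)"

definition C_coloring_on ::
  "'a set \<Rightarrow> 'a set set \<Rightarrow> ('a \<Rightarrow> 'a \<Rightarrow> (nat \<times> nat) set) \<Rightarrow> ('a \<Rightarrow> nat) \<Rightarrow> bool" where
  "C_coloring_on X E M \<phi> \<longleftrightarrow>
     (\<forall>v\<in>X. \<phi> v \<in> {1,2,3}) \<and>
     (\<forall>u\<in>X. \<forall>v\<in>X. {u, v} \<in> E \<longrightarrow> (\<phi> u, \<phi> v) \<notin> M u v)"

definition counterexample ::
  "'a set \<Rightarrow> 'a set set \<Rightarrow> ('a \<Rightarrow> complex) \<Rightarrow> ('a set \<Rightarrow> real \<Rightarrow> complex) \<Rightarrow>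
   'a set \<Rightarrow> ('a \<Rightarrow> 'a \<Rightarrow> (nat \<times> nat) set) \<Rightarrow> ('a \<Rightarrow> nat) \<Rightarrow> bool" where
  "counterexample V E pos \<gamma> S M \<phi>0 \<longleftrightarrow>
     plane_graph V E pos \<gamma> \<and> no_adjacent_short_cycles E \<and>
     S \<subseteq> V \<and> card S \<le> 12 \<and>
     ((\<exists>v\<in>V. S = {v}) \<or> (\<exists>F\<in>faces V E pos \<gamma>. S = face_vertices V pos F)) \<and>
     corr3 E M \<and> consistent_on_triangles E M \<and>
     C_coloring_on S E M \<phi>0 \<and>
     \<not> (\<exists>\<phi>. C_coloring_on V E M \<phi> \<and> (\<forall>v\<in>S. \<phi> v = \<phi>0 v))"

definition induced_edges :: "'a set set \<Rightarrow> 'a set \<Rightarrow> 'a set set" where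
  "induced_edges E S = {e\<in>E. e \<subseteq> S}"

definition weight :: "'a set set \<Rightarrow> ('a \<Rightarrow> 'a \<Rightarrow> (nat \<times> nat) set) \<Rightarrow> nat" where
  "weight E M = (\<Sum>e\<in>E. card (C_edges M e))"

definition better ::
  "'a set \<Rightarrow> 'a set set \<Rightarrow> 'a set \<Rightarrow> ('a \<Rightarrow> 'a \<Rightarrow> (nat \<times> nat) set) \<Rightarrow>
   'a set \<Rightarrow> 'a set set \<Rightarrow> 'a set \<Rightarrow> ('a \<Rightarrow> 'a \<Rightarrow> (nat \<times> nat) set) \<Rightarrow> bool" where
  "better V' E' S' M' V E S M \<longleftrightarrow>
     card V' < card V \<or>
     (card V' = card V \<and>
        (card E' - card (induced_edges E' S') < card E - card (induced_edges E S) \<or>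
         (card E' - card (induced_edges E' S') = card E - card (induced_edges E S) \<and>
          weight E' M' > weight E M)))"

definition minimal_counterexample ::
  "'a set \<Rightarrow> 'a set set \<Rightarrow> ('a \<Rightarrow> complex) \<Rightarrow> ('a set \<Rightarrow> real \<Rightarrow> complex) \<Rightarrow>
   'a set \<Rightarrow> ('a \<Rightarrow> 'a \<Rightarrow> (nat \<times> nat) set) \<Rightarrow> ('a \<Rightarrow> nat) \<Rightarrow> bool" where
  "minimal_counterexample V E pos \<gamma> S M \<phi>0 \<longleftrightarrow>
     counterexample V E pos \<gamma> S M \<phi>0 \<and>
     \<not> (\<exists>V' E' pos' \<gamma>' S' M' \<phi>0'. counterexample V' E' pos' \<gamma>' S' M' \<phi>0' \<and>
          better V' E' S' M' V E S M)"

end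

(* A minimal counterexample maximises the total size of the matchings C_e among
   counterexamples on the same graph with the same precolouring.  Replacing C_uv by a larger
   matching f therefore must destroy the counterexample; it does not, as long as f respects the
   precolouring, every colouring respecting f respects C_uv (for instance f contains C_uv), and
   consistency on triangles is kept.  If uv lies in no triangle, any one-pair extension of C_uv
   (or, when both ends are precoloured, a perfect matching avoiding the precoloured pair) qualifies,
   so |C_uv| = 3.  Otherwise uv lies in exactly one triangle uvw, since two triangles on uv would be
   adjacent 3-cycles.  Extending C_vw and C_wu to perfect matchings and composing them gives a
   perfect matching closing the triangle consistently; from it one obtains a consistent matching
   with at least two pairs that either extends C_uv when |C_uv| <= 1 or avoids the precoloured pair. *)

theory Submission
  imports Defs
begin

section \<open>Matchings between two copies of the colour set\<close>

definition partial_matching :: "(nat \<times> nat) set \<Rightarrow> bool" where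
  "partial_matching f \<longleftrightarrow> Field f \<subseteq> {1,2,3} \<and> single_valued f \<and> single_valued (f\<inverse>)"

lemma partial_matching_converse [simp]: "partial_matching (f\<inverse>) \<longleftrightarrow> partial_matching f"
  unfolding partial_matching_def by auto

lemma partial_matching_subset: "partial_matching g \<Longrightarrow> f \<subseteq> g \<Longrightarrow> partial_matching f"
  unfolding partial_matching_def Field_def by (meson Domain_mono Range_mono Un_mono order_trans
    single_valued_subset converse_mono)

lemma finite_partial_matching: "partial_matching f \<Longrightarrow> finite f"
proof -
  assume "partial_matching f"
  then have "finite (Domain f \<times> Range f)"
    unfolding partial_matching_def Field_def by (auto intro: finite_subset)
  moreover have "f \<subseteq> Domain f \<times> Range f" by auto
  ultimately show ?thesis by (rule finite_subset[rotated])
qed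

lemma card_Domain_partial_matching: "partial_matching f \<Longrightarrow> card (Domain f) = card f"
proof -
  assume "partial_matching f"
  then have "inj_on fst f"
    unfolding partial_matching_def single_valued_def inj_on_def by auto
  then show ?thesis by (simp add: card_image flip: fst_eq_Domain)
qed

lemma card_partial_matching_eq_3_iff:
  assumes "partial_matching f"
  shows "card f = 3 \<longleftrightarrow> Domain f = {1,2,3}"
proof -
  have "Domain f \<subseteq> {1,2,3}" using assms unfolding partial_matching_def Field_def by blast
  then show ?thesis
    using card_subset_eq[of "{1,2,3::nat}" "Domain f"] card_Domain_partial_matching[OF assms]
    by auto
qed

lemma card_partial_matching_le_3: "partial_matching f \<Longrightarrow> card f \<le> 3"
proof -
  assume f: "partial_matching f"
  then have "card (Domain f) \<le> card {1,2,3::nat}"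
    by (intro card_mono) (auto simp: partial_matching_def Field_def)
  then show ?thesis using card_Domain_partial_matching[OF f] by simp
qed

lemma partial_matching_insert_fresh:
  assumes f: "partial_matching f" and "c \<in> {1,2,3}" "d \<in> {1,2,3}" "c \<notin> Domain f" "d \<notin> Range f"
  shows "partial_matching (insert (c, d) f)"
proof -
  have "single_valued (insert (c, d) f)" "single_valued ((insert (c, d) f)\<inverse>)"
    using assms unfolding partial_matching_def single_valued_def by blast+
  moreover have "Field (insert (c, d) f) \<subseteq> {1,2,3}"
    using assms unfolding partial_matching_def by simp
  ultimately show ?thesis unfolding partial_matching_def by blast
qed

lemma partial_matching_insert:
  assumes f: "partial_matching f" and "card f < 3"
  shows "\<exists>c d. (c, d) \<notin> f \<and> partial_matching (insert (c, d) f)"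
proof -
  have "Domain f \<noteq> {1,2,3}" "Range f \<noteq> {1,2,3}"
    using assms card_partial_matching_eq_3_iff[of f] card_partial_matching_eq_3_iff[of "f\<inverse>"]
    by auto
  moreover have "Domain f \<subseteq> {1,2,3}" "Range f \<subseteq> {1,2,3}"
    using f unfolding partial_matching_def Field_def by blast+
  ultimately obtain c d where "c \<in> {1,2,3}" "c \<notin> Domain f" "d \<in> {1,2,3}" "d \<notin> Range f"
    by blast
  then show ?thesis using partial_matching_insert_fresh[OF f] by blast
qed

lemma partial_matching_extends_to_perfect:
  "partial_matching f \<Longrightarrow> \<exists>g. f \<subseteq> g \<and> partial_matching g \<and> card g = 3"
proof (induction "3 - card f" arbitrary: f rule: less_induct)
  case (less f)
  show ?case
  proof (cases "card f < 3")
    case False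
    then show ?thesis
      using less.prems card_partial_matching_le_3[OF less.prems] by (intro exI[of _ f]) auto
  next
    case True
    then obtain c d where cd: "(c, d) \<notin> f" "partial_matching (insert (c, d) f)"
      using partial_matching_insert[OF less.prems] by blast
    then have "3 - card (insert (c, d) f) < 3 - card f"
      using True finite_partial_matching[OF less.prems] by simp
    then obtain g where "insert (c, d) f \<subseteq> g" "partial_matching g" "card g = 3"
      using less.hyps cd(2) by blast
    then show ?thesis by blast
  qed
qed

lemma perfect_matching_avoiding: "\<exists>g. partial_matching g \<and> card g = 3 \<and> p \<notin> g"
proof -
  let ?I = "{(1,1), (2,2), (3,3)} :: (nat \<times> nat) set"
  let ?R = "{(1,2), (2,3), (3,1)} :: (nat \<times> nat) set"
  have "partial_matching ?I" "partial_matching ?R" "card ?I = 3" "card ?R = 3"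
    unfolding partial_matching_def single_valued_def Field_def by auto
  moreover have "p \<notin> ?I \<or> p \<notin> ?R" by auto
  ultimately show ?thesis by blast
qed

lemma perfect_matching_avoids_row_and_column:
  assumes h: "partial_matching h" "card h = 3"
  shows "\<exists>c d. (c, d) \<in> h \<and> c \<noteq> c0 \<and> d \<noteq> d0"
proof (rule ccontr)
  assume "\<not> ?thesis"
  then have cover: "h \<subseteq> {p \<in> h. fst p = c0} \<union> {p \<in> h. snd p = d0}" by force
  have fin: "finite h" using finite_partial_matching[OF h(1)] .
  have "card {p \<in> h. fst p = c0} \<le> 1" "card {p \<in> h. snd p = d0} \<le> 1"
    using h(1) fin unfolding partial_matching_def single_valued_def
    by (auto simp: card_le_Suc0_iff_eq)
  moreover have "card h \<le> card ({p \<in> h. fst p = c0} \<union> {p \<in> h. snd p = d0})"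
    using cover fin by (intro card_mono) auto
  moreover have "\<dots> \<le> card {p \<in> h. fst p = c0} + card {p \<in> h. snd p = d0}"
    by (rule card_Un_le)
  ultimately show False using h(2) by linarith
qed

section \<open>Consistency around a triangle\<close>

definition consistent_triangle ::
  "(nat \<times> nat) set \<Rightarrow> (nat \<times> nat) set \<Rightarrow> (nat \<times> nat) set \<Rightarrow> bool" where
  "consistent_triangle X Y Z \<longleftrightarrow> X O Y O Z \<subseteq> Id \<and> Y O Z O X \<subseteq> Id \<and> Z O X O Y \<subseteq> Id"

lemma consistent_triangle_rotate: "consistent_triangle X Y Z \<Longrightarrow> consistent_triangle Y Z X"
  unfolding consistent_triangle_def by blast

lemma consistent_triangle_converse:
  "consistent_triangle X Y Z \<Longrightarrow> consistent_triangle (Z\<inverse>) (Y\<inverse>) (X\<inverse>)"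
  unfolding consistent_triangle_def by blast

lemma consistent_triangle_mono:
  "consistent_triangle X Y Z \<Longrightarrow> X' \<subseteq> X \<Longrightarrow> Y' \<subseteq> Y \<Longrightarrow> Z' \<subseteq> Z \<Longrightarrow>
    consistent_triangle X' Y' Z'"
  unfolding consistent_triangle_def by blast

lemma consistent_triangle_Un:
  "consistent_triangle X Y Z \<Longrightarrow> consistent_triangle X' Y Z \<Longrightarrow>
    consistent_triangle (X \<union> X') Y Z"
  unfolding consistent_triangle_def by blast

lemma consistent_triangle_relcomp:
  "partial_matching Y \<Longrightarrow> partial_matching Z \<Longrightarrow> consistent_triangle ((Y O Z)\<inverse>) Y Z"
  unfolding partial_matching_def consistent_triangle_def single_valued_def by blast

lemma consistent_perfect_matching_exists:
  assumes "partial_matching Y" "partial_matching Z"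
  shows "\<exists>X. partial_matching X \<and> card X = 3 \<and> consistent_triangle X Y Z"
proof -
  obtain Y' Z' where Y': "Y \<subseteq> Y'" "partial_matching Y'" "card Y' = 3"
    and Z': "Z \<subseteq> Z'" "partial_matching Z'" "card Z' = 3"
    using partial_matching_extends_to_perfect assms by meson
  have "Domain Y' = {1,2,3}" "Domain Z' = {1,2,3}" "Range Y' \<subseteq> {1,2,3}"
    using Y' Z' card_partial_matching_eq_3_iff unfolding partial_matching_def Field_def by blast+
  then have "Domain (Y' O Z') = {1,2,3}" by blast
  moreover have YZ: "partial_matching (Y' O Z')"
    using Y'(2) Z'(2) unfolding partial_matching_def Field_def
    by (auto simp: single_valued_relcomp converse_relcomp)
  ultimately have "card ((Y' O Z')\<inverse>) = 3" using card_partial_matching_eq_3_iff by simp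
  moreover have "consistent_triangle ((Y' O Z')\<inverse>) Y Z"
    using consistent_triangle_mono[OF consistent_triangle_relcomp[OF Y'(2) Z'(2)]
        subset_refl Y'(1) Z'(1)] .
  moreover have "partial_matching ((Y' O Z')\<inverse>)" using YZ by simp
  ultimately show ?thesis by blast
qed

lemma consistent_matching_insert:
  assumes X: "partial_matching X" "card X \<le> 1" and YZ: "partial_matching Y" "partial_matching Z"
    and cons: "consistent_triangle X Y Z"
  shows "\<exists>X'. X \<subset> X' \<and> partial_matching X' \<and> consistent_triangle X' Y Z"
proof -
  obtain c0 d0 where X_sub: "X \<subseteq> {(c0, d0)}"
  proof (cases "X = {}")
    case False
    then obtain c0 d0 where "(c0, d0) \<in> X" by auto
    moreover have "\<forall>p\<in>X. \<forall>q\<in>X. p = q"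
      using X card_le_Suc0_iff_eq[OF finite_partial_matching[OF X(1)]] by simp
    ultimately show ?thesis using that by blast
  qed blast
  obtain h where h: "partial_matching h" "card h = 3" "consistent_triangle h Y Z"
    using consistent_perfect_matching_exists[OF YZ] by blast
  obtain c d where cd: "(c, d) \<in> h" "c \<noteq> c0" "d \<noteq> d0"
    using perfect_matching_avoids_row_and_column[OF h(1,2)] by blast
  have "{(c, d)} \<subseteq> h" using cd(1) by simp
  then have "consistent_triangle {(c, d)} Y Z"
    by (rule consistent_triangle_mono[OF h(3) _ subset_refl subset_refl])
  then have cons': "consistent_triangle (insert (c, d) X) Y Z"
    using consistent_triangle_Un[OF _ cons] by (metis insert_is_Un)
  have "c \<in> {1,2,3}" "d \<in> {1,2,3}"
    using h(1) cd(1) unfolding partial_matching_def Field_def by blast+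
  with X_sub cd(2,3) have "partial_matching (insert (c, d) X)"
    by (intro partial_matching_insert_fresh[OF X(1)]) auto
  moreover have "X \<subset> insert (c, d) X" using X_sub cd(2) by auto
  ultimately show ?thesis using cons' by blast
qed

lemma consistent_matching_avoiding:
  assumes "partial_matching Y" "partial_matching Z"
  shows "\<exists>X. partial_matching X \<and> 2 \<le> card X \<and> p \<notin> X \<and> consistent_triangle X Y Z"
proof -
  obtain h where h: "partial_matching h" "card h = 3" "consistent_triangle h Y Z"
    using consistent_perfect_matching_exists[OF assms] by blast
  have sub: "h - {p} \<subseteq> h" by blast
  have "partial_matching (h - {p})" using partial_matching_subset[OF h(1) sub] .
  moreover have "consistent_triangle (h - {p}) Y Z"
    using consistent_triangle_mono[OF h(3) sub subset_refl subset_refl] .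
  moreover have "2 \<le> card (h - {p})" using h(2) by (simp add: card_Diff_singleton_if)
  ultimately show ?thesis by blast
qed

section \<open>Triangles in the graph\<close>

lemma cycle_edges_image:
  "cycle_edges vs = (\<lambda>i. {vs ! i, vs ! ((i + 1) mod length vs)}) ` {..<length vs}"
  unfolding cycle_edges_def by blast

lemma cycle_edges_triangle: "cycle_edges [a, b, c] = {{a, b}, {b, c}, {c, a}}"
  unfolding cycle_edges_image by (simp add: lessThan_Suc insert_commute)

lemma is_cycle_triangle:
  assumes "a \<noteq> b" "b \<noteq> c" "a \<noteq> c" "{a, b} \<in> E" "{b, c} \<in> E" "{c, a} \<in> E"
  shows "is_cycle E [a, b, c]"
  using assms unfolding is_cycle_def by (simp add: All_less_Suc)

lemma simple_graph_edge_neq: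
  assumes "simple_graph V E" "{x, y} \<in> E"
  shows "x \<noteq> y"
proof
  assume "x = y"
  then have "card {x, y} = 1" by simp
  moreover have "card {x, y} = 2" using assms unfolding simple_graph_def by blast
  ultimately show False by simp
qed

lemma common_neighbour_unique:
  assumes sg: "simple_graph V E" and nas: "no_adjacent_short_cycles E"
    and e: "{u, v} \<in> E" "{u, w} \<in> E" "{v, w} \<in> E" "{u, w'} \<in> E" "{v, w'} \<in> E"
  shows "w = w'"
proof (rule ccontr)
  assume ne: "w \<noteq> w'"
  have d: "u \<noteq> v" "u \<noteq> w" "v \<noteq> w" "u \<noteq> w'" "v \<noteq> w'"
    using e simple_graph_edge_neq[OF sg] by blast+
  have "{w, u} \<in> E" "{w', u} \<in> E" using e(2,4) by (simp_all add: insert_commute)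
  then have "is_cycle E [u, v, w]" "is_cycle E [u, v, w']"
    using is_cycle_triangle[OF d(1) d(3) d(2) e(1) e(3)]
      is_cycle_triangle[OF d(1) d(5) d(4) e(1) e(5)]
    by blast+
  moreover have "cycle_edges [u, v, w] \<noteq> cycle_edges [u, v, w']"
  proof
    assume eq: "cycle_edges [u, v, w] = cycle_edges [u, v, w']"
    have "{v, w} \<in> cycle_edges [u, v, w']"
      unfolding eq[symmetric] by (simp add: cycle_edges_triangle)
    then have "{v, w} \<in> {{u, v}, {v, w'}, {w', u}}" by (simp only: cycle_edges_triangle)
    then show False using d ne by (auto simp: doubleton_eq_iff)
  qed
  moreover have "{u, v} \<in> cycle_edges [u, v, w] \<inter> cycle_edges [u, v, w']"
    by (simp add: cycle_edges_triangle)
  moreover have "length [u, v, w] \<le> 8" "length [u, v, w'] \<le> 8" by simp_all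
  ultimately show False using nas unfolding no_adjacent_short_cycles_def by blast
qed

lemma consistent_on_triangles_iff:
  "consistent_on_triangles E M \<longleftrightarrow>
    (\<forall>a b c. {a, b} \<in> E \<longrightarrow> {b, c} \<in> E \<longrightarrow> {c, a} \<in> E \<longrightarrow> M a b O M b c O M c a \<subseteq> Id)"
proof -
  have walk: "closed_walk E ws \<and> length ws = 4 \<longleftrightarrow>
      (\<exists>a b c. ws = [a, b, c, a] \<and> {a, b} \<in> E \<and> {b, c} \<in> E \<and> {c, a} \<in> E)" for ws
    unfolding closed_walk_def
    by (auto simp: less_Suc_eq numeral_eq_Suc length_Suc_conv insert_commute)
  have incons: "inconsistent_on M [a, b, c, a] \<longleftrightarrow> \<not> M a b O M b c O M c a \<subseteq> Id" for a b c
  proof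
    assume "inconsistent_on M [a, b, c, a]"
    then obtain cs where cs: "length cs = length [a, b, c, a]" "hd cs \<noteq> last cs"
      "\<forall>i. Suc i < length [a, b, c, a] \<longrightarrow>
        (cs ! i, cs ! Suc i) \<in> M ([a, b, c, a] ! i) ([a, b, c, a] ! Suc i)"
      unfolding inconsistent_on_def by blast
    then obtain x y z t where "cs = [x, y, z, t]" by (auto simp: length_Suc_conv)
    with cs(2) cs(3)[rule_format, of 0] cs(3)[rule_format, of 1] cs(3)[rule_format, of 2]
    show "\<not> M a b O M b c O M c a \<subseteq> Id" by auto
  next
    assume "\<not> M a b O M b c O M c a \<subseteq> Id"
    then obtain x y z t where "(x, y) \<in> M a b" "(y, z) \<in> M b c" "(z, t) \<in> M c a" "x \<noteq> t"
      by auto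
    then show "inconsistent_on M [a, b, c, a]"
      unfolding inconsistent_on_def by (intro exI[of _ "[x, y, z, t]"]) (auto simp: less_Suc_eq)
  qed
  have "consistent_on_triangles E M \<longleftrightarrow>
      (\<forall>a b c. {a, b} \<in> E \<longrightarrow> {b, c} \<in> E \<longrightarrow> {c, a} \<in> E \<longrightarrow>
        \<not> inconsistent_on M [a, b, c, a])"
    unfolding consistent_on_triangles_def walk by blast
  then show ?thesis by (simp only: incons not_not)
qed

lemma finite_edges: "simple_graph V E \<Longrightarrow> finite E"
proof -
  assume "simple_graph V E"
  then have "E \<subseteq> Pow V" "finite V" unfolding simple_graph_def by auto
  then show ?thesis by (metis finite_Pow_iff finite_subset)
qed

section \<open>Replacing the matching on one edge\<close>

definition update_matching ::
  "('a \<Rightarrow> 'a \<Rightarrow> (nat \<times> nat) set) \<Rightarrow> 'a \<Rightarrow> 'a \<Rightarrow> (nat \<times> nat) set \<Rightarrow>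
    'a \<Rightarrow> 'a \<Rightarrow> (nat \<times> nat) set"
  where "update_matching M u v f x y =
    (if x = u \<and> y = v then f else if x = v \<and> y = u then f\<inverse> else M x y)"

lemma partial_matching_iff_subset_square:
  "partial_matching f \<longleftrightarrow> f \<subseteq> {1,2,3} \<times> {1,2,3} \<and> single_valued f \<and> single_valued (f\<inverse>)"
proof -
  have square: "Field f \<subseteq> A \<longleftrightarrow> f \<subseteq> A \<times> A" for A unfolding Field_def by auto
  show ?thesis by (simp only: partial_matching_def square)
qed

lemma corr3_iff:
  "corr3 E M \<longleftrightarrow> (\<forall>x y. partial_matching (M x y)) \<and> (\<forall>x y. M y x = (M x y)\<inverse>) \<and>
     (\<forall>x y. {x, y} \<notin> E \<longrightarrow> M x y = {})"
proof -
  have "(\<forall>u v c d d'. (c, d) \<in> M u v \<longrightarrow> (c, d') \<in> M u v \<longrightarrow> d = d') \<longleftrightarrow>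
      (\<forall>u v. single_valued (M u v))"
    "(\<forall>u v c c' d. (c, d) \<in> M u v \<longrightarrow> (c', d) \<in> M u v \<longrightarrow> c = c') \<longleftrightarrow>
      (\<forall>u v. single_valued ((M u v)\<inverse>))"
    unfolding single_valued_def by blast+
  then show ?thesis
    unfolding corr3_def partial_matching_iff_subset_square all_conj_distrib by argo
qed

lemma corr3D:
  assumes "corr3 E M"
  shows "partial_matching (M x y)" "M y x = (M x y)\<inverse>" "{x, y} \<notin> E \<Longrightarrow> M x y = {}"
  using assms unfolding corr3_iff by blast+

lemma update_matching_other:
  "\<not> (x = u \<and> y = v) \<Longrightarrow> \<not> (x = v \<and> y = u) \<Longrightarrow> update_matching M u v f x y = M x y"
  by (simp only: update_matching_def if_False)

lemma corr3_update_matching: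
  assumes M: "corr3 E M" and uv: "{u, v} \<in> E" "u \<noteq> v" and f: "partial_matching f"
  shows "corr3 E (update_matching M u v f)"
proof -
  let ?M = "update_matching M u v f"
  note pm = corr3D(1)[OF M] and conv = corr3D(2)[OF M] and empty = corr3D(3)[OF M]
  have "partial_matching (?M x y)" for x y
    using pm f unfolding update_matching_def by simp
  moreover have "?M y x = (?M x y)\<inverse>" for x y
    using uv(2) by (auto simp: update_matching_def conv[of x y])
  moreover have "?M x y = {}" if "{x, y} \<notin> E" for x y
  proof -
    have "{x, y} \<noteq> {u, v}" using that uv(1) by metis
    then have "\<not> (x = u \<and> y = v)" "\<not> (x = v \<and> y = u)" by (auto simp: insert_commute)
    then show ?thesis using empty[OF that] unfolding update_matching_def by auto
  qed
  ultimately show ?thesis unfolding corr3_iff by blast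
qed

lemma consistent_triangle_of_consistent_on_triangles:
  assumes "consistent_on_triangles E M" "{a, b} \<in> E" "{b, c} \<in> E" "{c, a} \<in> E"
  shows "consistent_triangle (M a b) (M b c) (M c a)"
  using assms unfolding consistent_on_triangles_iff consistent_triangle_def by blast

lemma consistent_on_triangles_update_matching:
  assumes cons: "consistent_on_triangles E M" and sg: "simple_graph V E" and uv: "{u, v} \<in> E"
    and conv: "\<And>x y. M y x = (M x y)\<inverse>"
    and f: "\<And>w. {u, w} \<in> E \<Longrightarrow> {v, w} \<in> E \<Longrightarrow> consistent_triangle f (M v w) (M w u)"
  shows "consistent_on_triangles E (update_matching M u v f)"
proof -
  let ?M = "update_matching M u v f"
  have on_uv: "consistent_triangle (?M a b) (?M b c) (?M c a)"
    if "{a, b} \<in> E" "{b, c} \<in> E" "{c, a} \<in> E" "a = u \<and> b = v \<or> a = v \<and> b = u" for a b c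
  proof -
    have ne: "c \<noteq> u" "c \<noteq> v" "u \<noteq> v"
      using that simple_graph_edge_neq[OF sg] by (metis insert_commute)+
    have tri: "consistent_triangle f (M v c) (M c u)"
      using f that by (auto simp: insert_commute)
    have "consistent_triangle (f\<inverse>) ((M c u)\<inverse>) ((M v c)\<inverse>)"
      using consistent_triangle_rotate[OF
          consistent_triangle_rotate[OF consistent_triangle_converse[OF tri]]] .
    then have tri': "consistent_triangle (f\<inverse>) (M u c) (M c v)"
      by (simp add: conv[of u c] conv[of c v])
    show ?thesis using that(4) ne tri tri' unfolding update_matching_def by auto
  qed
  have "consistent_triangle (?M a b) (?M b c) (?M c a)"
    if "{a, b} \<in> E" "{b, c} \<in> E" "{c, a} \<in> E" for a b c
  proof -
    consider "a = u \<and> b = v \<or> a = v \<and> b = u" | "b = u \<and> c = v \<or> b = v \<and> c = u"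
      | "c = u \<and> a = v \<or> c = v \<and> a = u"
      | "\<not> (a = u \<and> b = v \<or> a = v \<and> b = u)" "\<not> (b = u \<and> c = v \<or> b = v \<and> c = u)"
        "\<not> (c = u \<and> a = v \<or> c = v \<and> a = u)"
      by blast
    then show ?thesis
    proof cases
      case 1
      then show ?thesis using on_uv[OF that] by blast
    next
      case 2
      show ?thesis
        using consistent_triangle_rotate[OF
            consistent_triangle_rotate[OF on_uv[OF that(2,3,1) 2]]] .
    next
      case 3
      show ?thesis using consistent_triangle_rotate[OF on_uv[OF that(3,1,2) 3]] .
    next
      case 4
      then have "?M a b = M a b" "?M b c = M b c" "?M c a = M c a"
        by (intro update_matching_other; simp)+
      then show ?thesis using consistent_triangle_of_consistent_on_triangles[OF cons that] by simp
    qed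
  qed
  then show ?thesis unfolding consistent_on_triangles_iff consistent_triangle_def by blast
qed

lemma C_edges_doubleton:
  assumes "u \<noteq> v" "M v u = (M u v)\<inverse>"
  shows "C_edges M {u, v} = (\<lambda>(c, d). {(u, c), (v, d)}) ` M u v"
  using assms unfolding C_edges_def by (auto simp: doubleton_eq_iff image_iff)

lemma card_C_edges:
  assumes "u \<noteq> v" "M v u = (M u v)\<inverse>"
  shows "card (C_edges M {u, v}) = card (M u v)"
proof -
  have "inj_on (\<lambda>(c, d). {(u, c), (v, d)}) (M u v)"
    using assms(1) by (auto simp: inj_on_def doubleton_eq_iff)
  then show ?thesis unfolding C_edges_doubleton[OF assms] by (rule card_image)
qed

lemma C_edges_update_matching:
  assumes "e \<noteq> {u, v}"
  shows "C_edges (update_matching M u v f) e = C_edges M e"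
proof -
  have "update_matching M u v f x y = M x y" if "e = {x, y}" for x y
  proof (rule update_matching_other)
    show "\<not> (x = u \<and> y = v)" using that assms by blast
    show "\<not> (x = v \<and> y = u)" using that assms by (metis insert_commute)
  qed
  then show ?thesis unfolding C_edges_def by (intro Collect_cong ex_cong1 conj_cong refl) simp
qed

lemma weight_update_matching:
  assumes "finite E" "{u, v} \<in> E" "u \<noteq> v" "M v u = (M u v)\<inverse>"
  shows "weight E (update_matching M u v f) + card (M u v) = weight E M + card f"
proof -
  let ?M = "update_matching M u v f"
  have "card (C_edges ?M {u, v}) = card f"
    using card_C_edges[of u v ?M] assms(3) by (simp add: update_matching_def)
  moreover have "card (C_edges M {u, v}) = card (M u v)" using card_C_edges assms(3,4) .
  moreover have "(\<Sum>e\<in>E - {{u, v}}. card (C_edges ?M e)) =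
      (\<Sum>e\<in>E - {{u, v}}. card (C_edges M e))"
    by (intro sum.cong) (auto simp: C_edges_update_matching)
  ultimately show ?thesis
    unfolding weight_def sum.remove[OF assms(1,2)] by simp
qed

text \<open>By sub, a colouring respecting f respects C_uv: if both ends are precoloured, their colours
  are those of phi0, which respects C_uv.\<close>
lemma counterexample_update_matching:
  assumes ce: "counterexample V E pos \<gamma> S M \<phi>0" and uv: "{u, v} \<in> E"
    and f: "partial_matching f"
    and sub: "M u v \<subseteq> f \<or> u \<in> S \<and> v \<in> S"
    and avoid: "u \<in> S \<Longrightarrow> v \<in> S \<Longrightarrow> (\<phi>0 u, \<phi>0 v) \<notin> f"
    and cons: "consistent_on_triangles E (update_matching M u v f)"
  shows "counterexample V E pos \<gamma> S (update_matching M u v f) \<phi>0"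
proof -
  let ?M = "update_matching M u v f"
  have sg: "simple_graph V E" and corr: "corr3 E M" and col: "C_coloring_on S E M \<phi>0"
    and noext: "\<nexists>\<phi>. C_coloring_on V E M \<phi> \<and> (\<forall>x\<in>S. \<phi> x = \<phi>0 x)"
    using ce unfolding counterexample_def plane_graph_def by blast+
  have ne: "u \<noteq> v" using simple_graph_edge_neq[OF sg uv] .
  have conv: "M v u = (M u v)\<inverse>" using corr3D(2)[OF corr] .
  have "C_coloring_on S E ?M \<phi>0"
    using col avoid ne unfolding C_coloring_on_def update_matching_def by auto
  moreover have "\<nexists>\<phi>. C_coloring_on V E ?M \<phi> \<and> (\<forall>x\<in>S. \<phi> x = \<phi>0 x)"
  proof
    assume "\<exists>\<phi>. C_coloring_on V E ?M \<phi> \<and> (\<forall>x\<in>S. \<phi> x = \<phi>0 x)"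
    then obtain \<phi> where \<phi>: "C_coloring_on V E ?M \<phi>" "\<forall>x\<in>S. \<phi> x = \<phi>0 x" by blast
    have "u \<in> V" "v \<in> V" using sg uv unfolding simple_graph_def by blast+
    then have "(\<phi> u, \<phi> v) \<notin> ?M u v" using \<phi>(1) uv unfolding C_coloring_on_def by blast
    then have "(\<phi> u, \<phi> v) \<notin> f" by (simp add: update_matching_def)
    moreover have "u \<in> S \<Longrightarrow> v \<in> S \<Longrightarrow> (\<phi> u, \<phi> v) \<notin> M u v"
      using col \<phi>(2) uv unfolding C_coloring_on_def by auto
    ultimately have "(\<phi> u, \<phi> v) \<notin> M u v" using sub by blast
    then have "C_coloring_on V E M \<phi>"
      using \<phi>(1) conv unfolding C_coloring_on_def update_matching_def by (auto split: if_splits)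
    then show False using noext \<phi>(2) by blast
  qed
  moreover have "corr3 E ?M" using corr3_update_matching[OF corr uv ne f] .
  ultimately show ?thesis using ce cons unfolding counterexample_def by blast
qed

section \<open>Minimal counterexamples\<close>

lemma minimal_counterexample_matching_maximal:
  assumes mc: "minimal_counterexample V E pos \<gamma> S M \<phi>0" and uv: "{u, v} \<in> E"
    and f: "partial_matching f" "card (M u v) < card f"
    and sub: "M u v \<subseteq> f \<or> u \<in> S \<and> v \<in> S"
    and avoid: "u \<in> S \<Longrightarrow> v \<in> S \<Longrightarrow> (\<phi>0 u, \<phi>0 v) \<notin> f"
    and triangles:
      "\<And>w. {u, w} \<in> E \<Longrightarrow> {v, w} \<in> E \<Longrightarrow> consistent_triangle f (M v w) (M w u)"
  shows False
proof -
  have ce: "counterexample V E pos \<gamma> S M \<phi>0"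
    using mc unfolding minimal_counterexample_def by blast
  then have sg: "simple_graph V E" and corr: "corr3 E M" and cons: "consistent_on_triangles E M"
    unfolding counterexample_def plane_graph_def by blast+
  have conv: "\<And>x y. M y x = (M x y)\<inverse>" by (rule corr3D(2)[OF corr])
  let ?M = "update_matching M u v f"
  have "counterexample V E pos \<gamma> S ?M \<phi>0"
    using counterexample_update_matching[OF ce uv f(1) sub avoid]
      consistent_on_triangles_update_matching[OF cons sg uv conv triangles] by blast
  moreover have "weight E ?M + card (M u v) = weight E M + card f"
    by (rule weight_update_matching[OF finite_edges[OF sg] uv simple_graph_edge_neq[OF sg uv]
          conv])
  then have "weight E M < weight E ?M" using f(2) by linarith
  ultimately show False using mc unfolding minimal_counterexample_def better_def by blast
qed

lemma minimal_counterexample_card_matching_no_triangle: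
  assumes mc: "minimal_counterexample V E pos \<gamma> S M \<phi>0" and uv: "{u, v} \<in> E"
    and no_triangle: "\<nexists>w. {u, w} \<in> E \<and> {v, w} \<in> E"
  shows "card (M u v) = 3"
proof (rule ccontr)
  have "corr3 E M" using mc unfolding minimal_counterexample_def counterexample_def by blast
  then have M: "partial_matching (M u v)" by (rule corr3D)
  have triangles:
    "\<And>w. {u, w} \<in> E \<Longrightarrow> {v, w} \<in> E \<Longrightarrow> consistent_triangle f (M v w) (M w u)" for f
    using no_triangle by blast
  assume "card (M u v) \<noteq> 3"
  then have less: "card (M u v) < 3" using card_partial_matching_le_3[OF M] by linarith
  show False
  proof (cases "u \<in> S \<and> v \<in> S")
    case True
    obtain f where f: "partial_matching f" "card f = 3" "(\<phi>0 u, \<phi>0 v) \<notin> f"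
      using perfect_matching_avoiding by blast
    have "card (M u v) < card f" using less f(2) by simp
    from minimal_counterexample_matching_maximal[OF mc uv f(1) this _ _ triangles]
    show False using True f(3) by blast
  next
    case False
    obtain c d where cd: "(c, d) \<notin> M u v" "partial_matching (insert (c, d) (M u v))"
      using partial_matching_insert[OF M less] by blast
    then have "card (M u v) < card (insert (c, d) (M u v))"
      using finite_partial_matching[OF M] by simp
    from minimal_counterexample_matching_maximal[OF mc uv cd(2) this _ _ triangles]
    show False using False by blast
  qed
qed

lemma minimal_counterexample_card_matching_triangle:
  assumes mc: "minimal_counterexample V E pos \<gamma> S M \<phi>0" and uv: "{u, v} \<in> E"
    and w: "{u, w} \<in> E" "{v, w} \<in> E"
  shows "2 \<le> card (M u v)"
proof (rule ccontr)
  have sg: "simple_graph V E" and nas: "no_adjacent_short_cycles E" and corr: "corr3 E M"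
    and cons: "consistent_on_triangles E M"
    using mc unfolding minimal_counterexample_def counterexample_def plane_graph_def by blast+
  have M: "partial_matching (M u v)" "partial_matching (M v w)" "partial_matching (M w u)"
    using corr3D(1)[OF corr] by blast+
  have triangles:
    "\<And>w'. {u, w'} \<in> E \<Longrightarrow> {v, w'} \<in> E \<Longrightarrow> consistent_triangle f (M v w') (M w' u)"
    if "consistent_triangle f (M v w) (M w u)" for f
    using common_neighbour_unique[OF sg nas uv w] that by blast
  assume "\<not> 2 \<le> card (M u v)"
  then have le1: "card (M u v) \<le> 1" by linarith
  show False
  proof (cases "u \<in> S \<and> v \<in> S")
    case True
    obtain f where f: "partial_matching f" "2 \<le> card f" "(\<phi>0 u, \<phi>0 v) \<notin> f"
      "consistent_triangle f (M v w) (M w u)"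
      using consistent_matching_avoiding[OF M(2,3)] by blast
    have "card (M u v) < card f" using le1 f(2) by linarith
    from minimal_counterexample_matching_maximal[OF mc uv f(1) this _ _ triangles[OF f(4)]]
    show False using True f(3) by blast
  next
    case False
    have "{w, u} \<in> E" using w(1) by (simp add: insert_commute)
    then have "consistent_triangle (M u v) (M v w) (M w u)"
      by (rule consistent_triangle_of_consistent_on_triangles[OF cons uv w(2)])
    then obtain f
      where f: "M u v \<subset> f" "partial_matching f" "consistent_triangle f (M v w) (M w u)"
      using consistent_matching_insert[OF M(1) le1 M(2,3)] by blast
    have "card (M u v) < card f"
      using psubset_card_mono[OF finite_partial_matching[OF f(2)] f(1)] .
    from minimal_counterexample_matching_maximal[OF mc uv f(2) this _ _ triangles[OF f(3)]]
    show False using False f(1) by blast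
  qed
qed

theorem mainTheorem5:
  fixes V :: "'a set" and E :: "'a set set" and pos :: "'a \<Rightarrow> complex"
    and \<gamma> :: "'a set \<Rightarrow> real \<Rightarrow> complex" and S :: "'a set"
    and M :: "'a \<Rightarrow> 'a \<Rightarrow> (nat \<times> nat) set" and \<phi>0 :: "'a \<Rightarrow> nat"
    and D :: "complex set" and u v :: 'a
  assumes "minimal_counterexample V E pos \<gamma> S M \<phi>0"
    and "D \<in> faces V E pos \<gamma>" and "\<not> bounded D"
    and "S = face_vertices V pos D"
    and "{u, v} \<in> E" and "{u, v} \<notin> face_edges E \<gamma> D"
  shows "card (C_edges M {u, v}) \<ge> 2 \<and>
         ((\<nexists>w. {u, w} \<in> E \<and> {v, w} \<in> E) \<longrightarrow> card (C_edges M {u, v}) = 3)"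
proof -
  note mc = assms(1) and uv = assms(5)
  have sg: "simple_graph V E" and corr: "corr3 E M"
    using mc unfolding minimal_counterexample_def counterexample_def plane_graph_def by blast+
  have card_eq: "card (C_edges M {u, v}) = card (M u v)"
    using card_C_edges[OF simple_graph_edge_neq[OF sg uv] corr3D(2)[OF corr]] .
  have no_triangle: "(\<nexists>w. {u, w} \<in> E \<and> {v, w} \<in> E) \<Longrightarrow> card (M u v) = 3"
    using minimal_counterexample_card_matching_no_triangle[OF mc uv] .
  have "2 \<le> card (M u v)"
  proof (cases "\<exists>w. {u, w} \<in> E \<and> {v, w} \<in> E")
    case True
    then show ?thesis using minimal_counterexample_card_matching_triangle[OF mc uv] by blast
  next
    case False
    then show ?thesis using no_triangle by simp
  qed
  then show ?thesis using card_eq no_triangle by simp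
qed

end
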